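(* Consider the sequences generated by Algorithm PS under (A1)–(A7), let $p^k:=(z^k,w_1^k,\dots,w_{n-1}^k)$, and for each $k\ge0$ define the function $\varphi_k:\boldsymbol{\mathcal H}\to\mathbb R$ by $$\varphi_k(z,w_1,\dots,w_{n-1}):=\langle z,v^k\rangle+\sum_{i=1}^{n-1}\langle w_i,u_i^k\rangle-\sum_{i=1}^n\Big[\langle x_i^k,y_i^k\rangle+\tfrac1{4\beta_i}\|x_i^k-G_iz^k\|^2\Big]$$ (so the scalar $\varphi_k$ of the algorithm equals $\varphi_k(p^k)$). Then for all $k\ge0$: (a) $\varphi_k$ is affine, its gradient with respect to $\langle\cdot,\cdot\rangle_\gamma$ is $\nabla\varphi_k=(\gamma^{-1}v^k,u_1^k,\dots,u_{n-1}^k)$, and $\|\nabla\varphi_k\|_\gamma^2=\pi_k$; (b) for all $p=(z,w_1,\dots,w_{n-1})\in\boldsymbol{\mathcal H}$, with $w_n:=-\sum_{i=1}^{n-1}G_i^*w_i$, $$\varphi_k(p)=\sum_{i=1}^n\Big[\langle G_iz-x_i^k,\,y_i^k-w_i\rangle-\tfrac1{4\beta_i}\|x_i^k-G_iz^k\|^2\Big];$$ (c) $\mathcal S\subset\{p\in\boldsymbol{\mathcal H}:\varphi_k(p)\le0\}$; (d) $p^{k+1}=p^k-\tau_k\frac{\varphi_k(p^k)}{\|\nabla\varphi_k\|_\gamma^2}\nabla\varphi_k$ if $\varphi_k(p^k)>0$, and $p^{k+1}=p^k$ otherwise; (e) the sequences $(z^k)$ and $(w_i^k)$, $i=1,\dots,n$,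 are bounded.
   Context: Standing setting. Let $\mathcal H_0,\dots,\mathcal H_{n-1}$ be real Hilbert spaces ($n\ge2$) and $\mathcal H_n:=\mathcal H_0$. Conventions: $0\cdot\infty=0$, $r\cdot\infty=\infty$ for $r>0$, $1/\infty=0$, $1/0=\infty$. For each $i=1,\dots,n$: (A1) $G_i:\mathcal H_0\to\mathcal H_i$ is bounded linear and $G_n=I$; (A2) $A_i:\mathcal H_i\rightrightarrows\mathcal H_i$ is maximal monotone; (A3) $B_i:\mathcal H_i\to\mathcal H_i$ is monotone and $\ell_i$-Lipschitz, $\ell_i\in[0,\infty)$; (A4) $C_i:\mathcal H_i\to\mathcal H_i$ is $\beta_i$-cocoercive with $\beta_i\in(0,\infty]$, i.e. $\langle x-y,C_ix-C_iy\rangle\ge\beta_i\|C_ix-C_iy\|^2$ for all $x,y$ (so $\beta_i=\infty$ means $C_i$ is constant, and then $1/(4\beta_i)=0$); (A5) $D_i:\mathcal H_i\to\mathcal H_i$ is monotone and continuously differentiable with $\|D_i'(x)-D_i'(y)\|\le m_i\|x-y\|$ for all $x,y$, $m_i\in[0,\infty)$; (A6) with $T_i:=A_i+B_i+C_i+D_i$, the inclusion $0\in\sum_{i=1}^nG_i^*T_i(G_iz)$ has at least one solution $z\in\mathcal H_0$; (A7) there is $\mathcal I_D\subset\{1,\dots,n\}$ with $m_i>0$ for $i\in\mathcal I_D$ and $m_i=0$, $D_i=0$ for $i\notin\mathcal I_D$. Notation: $D_{i,(u)}(x):=D_i(u)+D_i'(u)(x-u)$; for a maximal monotone $S$, $J_S:=(S+I)^{-1}$.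 $\boldsymbol{\mathcal H}:=\mathcal H_0\times\mathcal H_1\times\cdots\times\mathcal H_{n-1}$ with inner product $\langle p,\tilde p\rangle_\gamma:=\gamma\langle z,\tilde z\rangle+\sum_{i=1}^{n-1}\langle w_i,\tilde w_i\rangle$ for $p=(z,w_1,\dots,w_{n-1})$, $\tilde p=(\tilde z,\tilde w_1,\dots,\tilde w_{n-1})$, and norm $\|\cdot\|_\gamma$; for such $p$ one writes $w_n:=-\sum_{i=1}^{n-1}G_i^*w_i$. The extended solution set is $\mathcal S:=\{p\in\boldsymbol{\mathcal H}: w_i\in T_i(G_iz),\ i=1,\dots,n\}$ (with $w_n$ as just defined). Algorithm PS. Input: $(z^0,w_1^0,\dots,w_{n-1}^0)\in\boldsymbol{\mathcal H}$, $0<\underline\tau<\overline\tau<2$, $0<\underline\theta<\overline\theta<2$, $\hat\rho>0$, $\hat\delta>0$, $\gamma>0$; $w_n^0:=-\sum_{i=1}^{n-1}G_i^*w_i^0$. For $k=0,1,2,\dots$: for each $i=1,\dots,n$ define $(\rho_i^k,x_i^k,y_i^k)$ as follows. (i) If $w_i^k\in T_i(G_iz^k)$: $\rho_i^k=\hat\rho$, $x_i^k=G_iz^k$, $y_i^k=w_i^k$. (ii) Otherwise, if $i\in\mathcal I_D$: $\rho_i^k>0$ and $x_i^k=J_{\rho_i^k(A_i+D_{i,(G_iz^k)})}\big(G_iz^k+\rho_i^kw_i^k-\rho_i^k(B_i+C_i)(G_iz^k)\big)$ satisfy $\underline\theta\le4\ell_i^2(\rho_i^k)^2+(\beta_i^{-1}+\hat\delta)\rho_i^k+(m_i\rho_i^k\|x_i^k-G_iz^k\|)^2\le\overline\theta$,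 and $y_i^k=\frac{G_iz^k-x_i^k}{\rho_i^k}+w_i^k+[B_i(x_i^k)-B_i(G_iz^k)]+[D_i(x_i^k)-D_{i,(G_iz^k)}(x_i^k)]$. (iii) Otherwise ($i\notin\mathcal I_D$): some $\rho_i^k>0$ is chosen, $x_i^k=J_{\rho_i^kA_i}\big(G_iz^k+\rho_i^kw_i^k-\rho_i^k(B_i+C_i)(G_iz^k)\big)$ and $y_i^k=\frac{G_iz^k-x_i^k}{\rho_i^k}+w_i^k+[B_i(x_i^k)-B_i(G_iz^k)]$. Then set $u_i^k=x_i^k-G_ix_n^k$ ($i=1,\dots,n-1$), $v^k=\sum_{i=1}^nG_i^*y_i^k$, $\varphi_k=\langle z^k,v^k\rangle+\sum_{i=1}^{n-1}\langle w_i^k,u_i^k\rangle-\sum_{i=1}^n\big[\langle x_i^k,y_i^k\rangle+\frac1{4\beta_i}\|x_i^k-G_iz^k\|^2\big]$, $\pi_k=\gamma^{-1}\|v^k\|^2+\sum_{i=1}^{n-1}\|u_i^k\|^2$. If $\varphi_k>0$: choose $\tau_k\in[\underline\tau,\overline\tau]$, $\alpha_k=\tau_k\varphi_k/\pi_k$, $z^{k+1}=z^k-\gamma^{-1}\alpha_kv^k$, $w_i^{k+1}=w_i^k-\alpha_ku_i^k$ ($i=1,\dots,n-1$); otherwise $z^{k+1}=z^k$, $w_i^{k+1}=w_i^k$. Finally $w_n^{k+1}=-\sum_{i=1}^{n-1}G_i^*w_i^{k+1}$. *)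

theory Defs
  imports "HOL-Analysis.Analysis"
begin

text \<open>The Hilbert spaces H_0,...,H_{n-1} are modelled as closed linear subspaces
  of one ambient real Hilbert space (every family of Hilbert spaces embeds isometrically
  in its Hilbert direct sum).  All operators are only constrained on their subspaces.\<close>

definition closed_subspace :: "'a::real_normed_vector set \<Rightarrow> bool" where
  "closed_subspace S \<longleftrightarrow> subspace S \<and> closed S"

definition bounded_linear_between :: "'a::real_normed_vector set \<Rightarrow> 'a set \<Rightarrow> ('a \<Rightarrow> 'a) \<Rightarrow> bool" where
  "bounded_linear_between S T G \<longleftrightarrow>
     (\<forall>x\<in>S. G x \<in> T) \<and>
     (\<forall>a b. \<forall>x\<in>S. \<forall>y\<in>S. G (a *\<^sub>R x + b *\<^sub>R y) = a *\<^sub>R G x + b *\<^sub>R G y) \<and>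
     (\<exists>K. \<forall>x\<in>S. norm (G x) \<le> K * norm x)"

definition is_adjoint_between :: "'a::real_inner set \<Rightarrow> 'a set \<Rightarrow> ('a \<Rightarrow> 'a) \<Rightarrow> ('a \<Rightarrow> 'a) \<Rightarrow> bool" where
  "is_adjoint_between S T G Gs \<longleftrightarrow>
     (\<forall>w\<in>T. Gs w \<in> S \<and> (\<forall>z\<in>S. inner (G z) w = inner z (Gs w)))"

definition monotone_op_on :: "'a::real_inner set \<Rightarrow> ('a \<Rightarrow> 'a) \<Rightarrow> bool" where
  "monotone_op_on S B \<longleftrightarrow> (\<forall>x\<in>S. B x \<in> S) \<and>
     (\<forall>x\<in>S. \<forall>y\<in>S. inner (x - y) (B x - B y) \<ge> 0)"

definition maximal_monotone_on :: "'a::real_inner set \<Rightarrow> ('a \<Rightarrow> 'a set) \<Rightarrow> bool" where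
  "maximal_monotone_on S A \<longleftrightarrow>
     (\<forall>x u. u \<in> A x \<longrightarrow> x \<in> S \<and> u \<in> S) \<and>
     (\<forall>x u y v. u \<in> A x \<longrightarrow> v \<in> A y \<longrightarrow> inner (x - y) (u - v) \<ge> 0) \<and>
     (\<forall>x\<in>S. \<forall>u\<in>S. (\<forall>y v. v \<in> A y \<longrightarrow> inner (x - y) (u - v) \<ge> 0) \<longrightarrow> u \<in> A x)"

definition lipschitz_op_on :: "'a::real_normed_vector set \<Rightarrow> real \<Rightarrow> ('a \<Rightarrow> 'a) \<Rightarrow> bool" where
  "lipschitz_op_on S L B \<longleftrightarrow> (\<forall>x\<in>S. \<forall>y\<in>S. norm (B x - B y) \<le> L * norm (x - y))"

text \<open>beta-cocoercivity with beta in (0,\<infinity>]; beta = \<infinity> means <x-y, Cx-Cy> \<ge> \<infinity>*\<parallel>Cx-Cy\<parallel>^2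
  with 0*\<infinity> = 0, i.e. C is constant.\<close>
definition cocoercive_on :: "'a::real_inner set \<Rightarrow> ereal \<Rightarrow> ('a \<Rightarrow> 'a) \<Rightarrow> bool" where
  "cocoercive_on S \<beta> C \<longleftrightarrow> (\<forall>x\<in>S. C x \<in> S) \<and>
     (\<forall>x\<in>S. \<forall>y\<in>S. ereal (inner (x - y) (C x - C y)) \<ge> \<beta> * ereal ((norm (C x - C y))\<^sup>2))"

definition ereal_recip :: "ereal \<Rightarrow> real" where
  "ereal_recip \<beta> = (if \<beta> = \<infinity> then 0 else 1 / real_of_ereal \<beta>)"

definition Dlin :: "('a::real_normed_vector \<Rightarrow> 'a) \<Rightarrow> ('a \<Rightarrow> 'a \<Rightarrow> 'a) \<Rightarrow> 'a \<Rightarrow> 'a \<Rightarrow> 'a" where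
  "Dlin D D' u x = D u + D' u (x - u)"

definition Top :: "('a::real_vector \<Rightarrow> 'a set) \<Rightarrow> ('a \<Rightarrow> 'a) \<Rightarrow> ('a \<Rightarrow> 'a) \<Rightarrow> ('a \<Rightarrow> 'a) \<Rightarrow> 'a \<Rightarrow> 'a set" where
  "Top A B C D x = (\<lambda>a. a + B x + C x + D x) ` A x"

definition resolvent :: "('a::real_vector \<Rightarrow> 'a set) \<Rightarrow> 'a \<Rightarrow> 'a set" where
  "resolvent S v = {x. v \<in> (\<lambda>s. s + x) ` S x}"

text \<open>The product space H_0 x H_1 x ... x H_{n-1}: points are functions p with
  p 0 = z, p i = w_i (1 \<le> i \<le> n-1), and p i = 0 for i \<ge> n.\<close>
definition prodH :: "nat \<Rightarrow> (nat \<Rightarrow> 'a::real_vector set) \<Rightarrow> (nat \<Rightarrow> 'a) set" where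
  "prodH n H = {p. (\<forall>i<n. p i \<in> H i) \<and> (\<forall>i\<ge>n. p i = 0)}"

definition inner_gamma :: "real \<Rightarrow> nat \<Rightarrow> (nat \<Rightarrow> 'a::real_inner) \<Rightarrow> (nat \<Rightarrow> 'a) \<Rightarrow> real" where
  "inner_gamma \<gamma> n p q = \<gamma> * inner (p 0) (q 0) + (\<Sum>i\<in>{1..<n}. inner (p i) (q i))"

definition norm_gamma :: "real \<Rightarrow> nat \<Rightarrow> (nat \<Rightarrow> 'a::real_inner) \<Rightarrow> real" where
  "norm_gamma \<gamma> n p = sqrt (inner_gamma \<gamma> n p p)"

definition affine_fun_on :: "(nat \<Rightarrow> 'a::real_vector) set \<Rightarrow> ((nat \<Rightarrow> 'a) \<Rightarrow> real) \<Rightarrow> bool" where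
  "affine_fun_on S f \<longleftrightarrow> (\<forall>p\<in>S. \<forall>q\<in>S. \<forall>t::real.
     f (\<lambda>i. (1 - t) *\<^sub>R p i + t *\<^sub>R q i) = (1 - t) * f p + t * f q)"

definition has_gradient_on :: "real \<Rightarrow> nat \<Rightarrow> (nat \<Rightarrow> 'a::real_inner) set \<Rightarrow> ((nat \<Rightarrow> 'a) \<Rightarrow> real) \<Rightarrow> (nat \<Rightarrow> 'a) \<Rightarrow> bool" where
  "has_gradient_on \<gamma> n S f g \<longleftrightarrow> g \<in> S \<and>
     (\<forall>p\<in>S. \<forall>\<epsilon>>0. \<exists>\<delta>>0. \<forall>h\<in>S. norm_gamma \<gamma> n h < \<delta> \<longrightarrow>
        \<bar>f (\<lambda>i. p i + h i) - f p - inner_gamma \<gamma> n g h\<bar> \<le> \<epsilon> * norm_gamma \<gamma> n h)"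

end

theory Submission
  imports Defs
begin

text \<open>Each \<open>\<phi>\<^sub>k\<close> is affine, \<open>\<phi>\<^sub>k(p) = \<langle>\<nabla>\<phi>\<^sub>k, p\<rangle>\<^sub>\<gamma> + \<phi>\<^sub>k(0)\<close>, and the adjoint identity
  \<open>\<Sum>\<^sub>i \<langle>G\<^sub>i \<xi>, w\<^sub>i\<rangle> = 0\<close> (valid whenever \<open>w\<^sub>n = -\<Sum> G\<^sub>i\<^sup>* w\<^sub>i\<close>) rearranges it into the
  separable form (b). Each step of Algorithm PS is a forward-backward step, so
  \<open>y\<^sub>i\<^sup>k \<in> A\<^sub>i x + B\<^sub>i x + C\<^sub>i(G\<^sub>i z\<^sup>k) + D\<^sub>i x\<close> with \<open>x = x\<^sub>i\<^sup>k\<close>. At a point of the extended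
  solution set, monotonicity of \<open>A\<^sub>i\<close>, \<open>B\<^sub>i\<close>, \<open>D\<^sub>i\<close> leaves only the \<open>C\<^sub>i\<close>-term in each summand
  of (b), and cocoercivity together with Young's inequality bounds it by
  \<open>\<parallel>x\<^sub>i\<^sup>k - G\<^sub>i z\<^sup>k\<parallel>\<^sup>2/(4\<beta>\<^sub>i)\<close>; hence \<open>\<phi>\<^sub>k \<le> 0\<close> there. The update is then a relaxed projection
  onto a half-space containing the extended solution set, so \<open>\<parallel>p\<^sup>k - s\<parallel>\<^sub>\<gamma>\<close> is nonincreasing for
  each of its points \<open>s\<close> (one exists by (A6)). This bounds \<open>z\<^sup>k\<close> and \<open>w\<^sub>i\<^sup>k\<close> for \<open>i < n\<close>, and
  \<open>w\<^sub>n\<^sup>k\<close> is their image under bounded adjoints.\<close>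

lemma maximal_monotone_on_memD:
  assumes "maximal_monotone_on S A" "a \<in> A x"
  shows "x \<in> S" "a \<in> S"
  using assms unfolding maximal_monotone_on_def by blast+

lemma operator_sum_mem:
  assumes "subspace S" "maximal_monotone_on S A" "monotone_op_on S B" "cocoercive_on S \<beta> C"
    "monotone_op_on S D" "q \<in> S" "a \<in> A x"
  shows "a + B x + C q + D x \<in> S"
proof -
  have "x \<in> S" "a \<in> S" using maximal_monotone_on_memD assms(2,7) by blast+
  with assms show ?thesis
    unfolding monotone_op_on_def cocoercive_on_def by (simp add: subspace_add)
qed

lemma Top_mem:
  assumes "subspace S" "maximal_monotone_on S A" "monotone_op_on S B" "cocoercive_on S \<beta> C"
    "monotone_op_on S D" "q \<in> S" "w \<in> Top A B C D q"
  shows "w \<in> S"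
  using assms operator_sum_mem[OF assms(1-6)] unfolding Top_def by auto

lemma resolvent_scaled_memD:
  assumes "x \<in> resolvent (\<lambda>q. (\<lambda>a. \<rho> *\<^sub>R (a + E q)) ` A q) r" "\<rho> \<noteq> 0"
  shows "(1 / \<rho>) *\<^sub>R (r - x) - E x \<in> A x"
proof -
  obtain a where "a \<in> A x" "r = \<rho> *\<^sub>R (a + E x) + x"
    using assms(1) unfolding resolvent_def by auto
  moreover have "(1 / \<rho>) *\<^sub>R (\<rho> *\<^sub>R (a + E x) + x - x) - E x = a"
    using assms(2) by simp
  ultimately show ?thesis by simp
qed

lemma is_adjoint_between_identity:
  assumes "subspace S" "is_adjoint_between S S G Gs" "\<forall>z\<in>S. G z = z" "w \<in> S"
  shows "Gs w = w"
proof -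
  define d where "d = w - Gs w"
  have "d \<in> S"
    using assms unfolding d_def is_adjoint_between_def by (blast intro: subspace_diff)
  then have "inner d d = inner (G d) w - inner d (Gs w)"
    using assms(3) by (simp add: d_def inner_diff_right)
  also have "\<dots> = 0"
    using assms(2,4) \<open>d \<in> S\<close> unfolding is_adjoint_between_def by simp
  finally show ?thesis unfolding d_def by simp
qed

lemma is_adjoint_between_bounded:
  assumes "bounded_linear_between S T G" "is_adjoint_between S T G Gs"
  obtains K where "K \<ge> 0" "\<forall>w\<in>T. norm (Gs w) \<le> K * norm w"
proof -
  obtain K where K: "\<forall>z\<in>S. norm (G z) \<le> K * norm z"
    using assms(1) unfolding bounded_linear_between_def by blast
  have "\<forall>w\<in>T. norm (Gs w) \<le> max K 0 * norm w"
  proof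
    fix w assume w: "w \<in> T"
    define g where "g = Gs w"
    have g: "g \<in> S" "inner (G g) w = inner g g"
      using assms(2) w unfolding g_def is_adjoint_between_def by auto
    have "norm g * norm g = inner (G g) w"
      using g by (simp add: power2_norm_eq_inner[symmetric] power2_eq_square)
    also have "\<dots> \<le> norm (G g) * norm w" by (rule norm_cauchy_schwarz)
    also have "\<dots> \<le> (max K 0 * norm g) * norm w"
      using K g by (intro mult_right_mono) (auto intro: order_trans[OF _ mult_right_mono])
    finally have "norm g * norm g \<le> norm g * (max K 0 * norm w)"
      by (simp add: algebra_simps)
    then show "norm (Gs w) \<le> max K 0 * norm w"
      unfolding g_def[symmetric] by (cases "norm g = 0") (auto simp: mult_le_cancel_left)
  qed
  then show ?thesis using that[of "max K 0"] by simp
qed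

lemma cocoercive_on_inner_le:
  fixes C :: "'a::real_inner \<Rightarrow> 'a"
  assumes "cocoercive_on S \<beta> C" "\<beta> > 0" "X \<in> S" "q \<in> S"
  shows "inner (X - x) (C q - C X) \<le> ereal_recip \<beta> / 4 * (norm (x - q))\<^sup>2"
proof -
  have co: "ereal (inner (q - X) (C q - C X)) \<ge> \<beta> * ereal ((norm (C q - C X))\<^sup>2)"
    using assms unfolding cocoercive_on_def by blast
  show ?thesis
  proof (cases "\<beta> = \<infinity>")
    case True
    have "C q = C X"
    proof (rule ccontr)
      assume "C q \<noteq> C X"
      then have "\<beta> * ereal ((norm (C q - C X))\<^sup>2) = \<infinity>" using True by simp
      then show False using co by simp
    qed
    then show ?thesis using True by (simp add: ereal_recip_def)
  next
    case False
    then obtain b where b: "\<beta> = ereal b" "b > 0" using assms(2) by (cases \<beta>) auto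
    define c where "c = norm (C q - C X)"
    define e where "e = norm (x - q)"
    have "inner (X - x) (C q - C X) = inner (q - x) (C q - C X) - inner (q - X) (C q - C X)"
      by (simp add: inner_diff_left)
    also have "\<dots> \<le> e * c - b * c\<^sup>2"
      using co b norm_cauchy_schwarz[of "q - x" "C q - C X"]
      unfolding c_def e_def by (simp add: norm_minus_commute)
    also have "\<dots> \<le> e\<^sup>2 / (4 * b)"
    proof -
      \<comment> \<open>Young's inequality\<close>
      have "0 \<le> (e - 2 * b * c)\<^sup>2" by simp
      then show ?thesis using b(2) by (simp add: field_simps power2_eq_square)
    qed
    finally show ?thesis using b unfolding e_def by (simp add: ereal_recip_def)
  qed
qed

lemma Top_gap_le:
  assumes "maximal_monotone_on S A" "monotone_op_on S B" "cocoercive_on S \<beta> C" "\<beta> > 0"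
    "monotone_op_on S D" "X \<in> S" "x \<in> S" "q \<in> S" "a \<in> A x" "wt \<in> Top A B C D X"
  shows "inner (X - x) (a + B x + C q + D x - wt) \<le> ereal_recip \<beta> / 4 * (norm (x - q))\<^sup>2"
proof -
  obtain a' where a': "a' \<in> A X" "wt = a' + B X + C X + D X"
    using assms(10) unfolding Top_def by auto
  have "inner (x - X) (a - a') \<ge> 0"
    using assms(1,9) a'(1) unfolding maximal_monotone_on_def by blast
  moreover have "inner (x - X) (B x - B X) \<ge> 0" "inner (x - X) (D x - D X) \<ge> 0"
    using assms(2,5-7) unfolding monotone_op_on_def by blast+
  moreover have "inner (X - x) (a + B x + C q + D x - wt) =
     inner (X - x) (C q - C X) - inner (x - X) (a - a') - inner (x - X) (B x - B X)
     - inner (x - X) (D x - D X)"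
    unfolding a'(2) by (simp add: algebra_simps inner_diff_left inner_diff_right inner_add_right)
  ultimately show ?thesis
    using cocoercive_on_inner_le[OF assms(3,4,6,8), of x] by linarith
qed

lemma inner_gamma_lincomb_right:
  "inner_gamma \<gamma> n g (\<lambda>i. a *\<^sub>R p i + b *\<^sub>R q i) = a * inner_gamma \<gamma> n g p + b * inner_gamma \<gamma> n g q"
  unfolding inner_gamma_def by (simp add: inner_add_right sum.distrib sum_distrib_left algebra_simps)

lemma inner_gamma_diff_right:
  "inner_gamma \<gamma> n g (\<lambda>i. p i - q i) = inner_gamma \<gamma> n g p - inner_gamma \<gamma> n g q"
  using inner_gamma_lincomb_right[of \<gamma> n g 1 p "-1" q] by simp

lemma inner_gamma_diff_scaleR_self:
  "inner_gamma \<gamma> n (\<lambda>i. d i - t *\<^sub>R g i) (\<lambda>i. d i - t *\<^sub>R g i)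
     = inner_gamma \<gamma> n d d - 2 * t * inner_gamma \<gamma> n g d + t\<^sup>2 * inner_gamma \<gamma> n g g"
  unfolding inner_gamma_def
  by (simp add: inner_diff_left inner_diff_right inner_commute sum_subtractf sum.distrib
      sum_distrib_left algebra_simps power2_eq_square)

lemma inner_gamma_self_nonneg: "\<gamma> \<ge> 0 \<Longrightarrow> inner_gamma \<gamma> n p p \<ge> 0"
  unfolding inner_gamma_def by (simp add: sum_nonneg)

lemma norm_gamma_power2: "\<gamma> \<ge> 0 \<Longrightarrow> (norm_gamma \<gamma> n p)\<^sup>2 = inner_gamma \<gamma> n p p"
  unfolding norm_gamma_def by (simp add: inner_gamma_self_nonneg)

lemma inner_gamma_self_ge_component:
  assumes "\<gamma> \<ge> 0"
  shows "\<gamma> * (norm (p 0))\<^sup>2 \<le> inner_gamma \<gamma> n p p"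
    and "i \<in> {1..<n} \<Longrightarrow> (norm (p i))\<^sup>2 \<le> inner_gamma \<gamma> n p p"
proof -
  have sum_ge: "(norm (p j))\<^sup>2 \<le> (\<Sum>i\<in>{1..<n}. inner (p i) (p i))" if "j \<in> {1..<n}" for j
    unfolding power2_norm_eq_inner by (rule member_le_sum) (use that in auto)
  show "\<gamma> * (norm (p 0))\<^sup>2 \<le> inner_gamma \<gamma> n p p"
    unfolding inner_gamma_def by (simp add: power2_norm_eq_inner sum_nonneg)
  show "i \<in> {1..<n} \<Longrightarrow> (norm (p i))\<^sup>2 \<le> inner_gamma \<gamma> n p p"
    using sum_ge[of i] assms unfolding inner_gamma_def by (simp add: add_increasing)
qed

lemma affine_fun_on_inner_gamma: "affine_fun_on S (\<lambda>p. inner_gamma \<gamma> n g p + c)"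
  unfolding affine_fun_on_def inner_gamma_lincomb_right by (simp add: algebra_simps)

lemma has_gradient_on_inner_gamma:
  assumes "\<gamma> \<ge> 0" "g \<in> S"
  shows "has_gradient_on \<gamma> n S (\<lambda>p. inner_gamma \<gamma> n g p + c) g"
proof -
  have "inner_gamma \<gamma> n g (\<lambda>i. p i + h i) = inner_gamma \<gamma> n g p + inner_gamma \<gamma> n g h" for p h
    using inner_gamma_lincomb_right[of \<gamma> n g 1 p 1 h] by simp
  moreover have "norm_gamma \<gamma> n h \<ge> 0" for h
    unfolding norm_gamma_def using inner_gamma_self_nonneg[OF assms(1)] by simp
  ultimately show ?thesis
    using assms(2) unfolding has_gradient_on_def by (auto intro!: exI[of _ 1] mult_nonneg_nonneg)
qed

text \<open>Fejer monotonicity of a relaxed projection onto the half-space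
  \<open>{q. inner_gamma \<gamma> n g (p - q) \<ge> \<phi>}\<close>, which contains \<open>s\<close>.\<close>
lemma inner_gamma_relaxed_projection_le:
  assumes "\<gamma> \<ge> 0" "\<phi> > 0" "inner_gamma \<gamma> n g (\<lambda>i. p i - s i) \<ge> \<phi>" "0 \<le> \<tau>" "\<tau> \<le> 2"
  defines "t \<equiv> \<tau> * \<phi> / inner_gamma \<gamma> n g g"
  shows "inner_gamma \<gamma> n (\<lambda>i. p i - t *\<^sub>R g i - s i) (\<lambda>i. p i - t *\<^sub>R g i - s i)
           \<le> inner_gamma \<gamma> n (\<lambda>i. p i - s i) (\<lambda>i. p i - s i)"
proof -
  define d where "d = (\<lambda>i. p i - s i)"
  define \<pi> where "\<pi> = inner_gamma \<gamma> n g g"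
  have t: "t \<ge> 0" "t * \<pi> \<le> 2 * \<phi>"
    using assms inner_gamma_self_nonneg[of \<gamma> n g]
    unfolding t_def \<pi>_def by (auto simp: field_simps)
  have "(\<lambda>i. p i - t *\<^sub>R g i - s i) = (\<lambda>i. d i - t *\<^sub>R g i)"
    unfolding d_def by (simp add: algebra_simps)
  then have "inner_gamma \<gamma> n (\<lambda>i. p i - t *\<^sub>R g i - s i) (\<lambda>i. p i - t *\<^sub>R g i - s i)
      = inner_gamma \<gamma> n d d - 2 * t * inner_gamma \<gamma> n g d + t\<^sup>2 * \<pi>"
    unfolding \<pi>_def by (simp only: inner_gamma_diff_scaleR_self)
  also have "\<dots> \<le> inner_gamma \<gamma> n d d - 2 * t * \<phi> + t * (t * \<pi>)"
    using assms(3) t(1) unfolding d_def by (simp add: mult_left_mono power2_eq_square)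
  also have "\<dots> \<le> inner_gamma \<gamma> n d d"
    using t mult_left_mono[OF t(2) t(1)] by simp
  finally show ?thesis unfolding d_def .
qed

lemma bounded_range_if_norm_diff_power2_le:
  assumes "\<And>k. (norm (f k - c))\<^sup>2 \<le> M"
  shows "bounded (range f)"
proof (rule bounded_subset[OF bounded_cball])
  have "norm (f k - c) \<le> sqrt M" for k
    using assms by (rule real_le_rsqrt)
  then show "range f \<subseteq> cball c (sqrt M)"
    by (auto simp: dist_norm norm_minus_commute)
qed

lemma bounded_range_sum:
  fixes f :: "'i \<Rightarrow> 'k \<Rightarrow> 'a::real_normed_vector"
  assumes "finite I" "\<And>i. i \<in> I \<Longrightarrow> bounded (range (f i))"
  shows "bounded (range (\<lambda>k. \<Sum>i\<in>I. f i k))"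
  using assms by (induction I rule: finite_induct) (auto intro: bounded_plus_comp)

lemma bounded_range_comp_norm_le:
  assumes "\<forall>w\<in>T. norm (L w) \<le> K * norm w" "range g \<subseteq> T" "bounded (range g)" "K \<ge> 0"
  shows "bounded (range (\<lambda>k. L (g k)))"
proof -
  obtain M where "\<forall>k. norm (g k) \<le> M"
    using assms(3) unfolding bounded_iff by blast
  then have "\<forall>k. norm (L (g k)) \<le> K * M"
    using assms(1,2,4) by (meson order_trans mult_left_mono rangeI subsetD)
  then show ?thesis unfolding bounded_iff by blast
qed

locale projective_splitting =
  fixes n :: nat
    and H :: "nat \<Rightarrow> 'h::real_inner set"
    and G Gs :: "nat \<Rightarrow> 'h \<Rightarrow> 'h"
    and A :: "nat \<Rightarrow> 'h \<Rightarrow> 'h set"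
    and B C D :: "nat \<Rightarrow> 'h \<Rightarrow> 'h"
    and D' :: "nat \<Rightarrow> 'h \<Rightarrow> 'h \<Rightarrow> 'h"
    and \<beta> :: "nat \<Rightarrow> ereal"
    and ID :: "nat set"
    and \<gamma> :: real
    and z :: "nat \<Rightarrow> 'h"
    and w x y u :: "nat \<Rightarrow> nat \<Rightarrow> 'h"
    and v :: "nat \<Rightarrow> 'h"
    and \<rho> :: "nat \<Rightarrow> nat \<Rightarrow> real"
    and \<phi> \<pi> \<tau> \<alpha> :: "nat \<Rightarrow> real"
    and P grad :: "nat \<Rightarrow> nat \<Rightarrow> 'h"
    and Phi :: "nat \<Rightarrow> (nat \<Rightarrow> 'h) \<Rightarrow> real"
  assumes n_pos: "n \<ge> 1"
    and H_subspace: "\<forall>i<n. subspace (H i)"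
    and H_last: "H n = H 0"
    and G_between: "\<forall>i\<in>{1..n}. bounded_linear_between (H 0) (H i) (G i)
                                \<and> is_adjoint_between (H 0) (H i) (G i) (Gs i)"
    and G_last: "\<forall>z'\<in>H 0. G n z' = z'"
    and A_maximal_monotone: "\<forall>i\<in>{1..n}. maximal_monotone_on (H i) (A i)"
    and B_monotone: "\<forall>i\<in>{1..n}. monotone_op_on (H i) (B i)"
    and C_cocoercive: "\<forall>i\<in>{1..n}. \<beta> i > 0 \<and> cocoercive_on (H i) (\<beta> i) (C i)"
    and D_monotone: "\<forall>i\<in>{1..n}. monotone_op_on (H i) (D i)"
    and D_vanishes: "\<forall>i\<in>{1..n} - ID. \<forall>x'\<in>H i. D i x' = 0"
    and solvable: "\<exists>zs\<in>H 0. \<exists>ws. (\<forall>i\<in>{1..n}. ws i \<in> Top (A i) (B i) (C i) (D i) (G i zs))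
                                  \<and> (\<Sum>i\<in>{1..n}. Gs i (ws i)) = 0"
    and \<gamma>_pos: "\<gamma> > 0"
    and init: "z 0 \<in> H 0 \<and> (\<forall>i\<in>{1..<n}. w 0 i \<in> H i)"
    and w_last: "\<And>k. w k n = - (\<Sum>i\<in>{1..<n}. Gs i (w k i))"
    and step_solved: "\<And>k i. i \<in> {1..n} \<Longrightarrow> w k i \<in> Top (A i) (B i) (C i) (D i) (G i (z k)) \<Longrightarrow>
          x k i = G i (z k) \<and> y k i = w k i"
    and step_linearized: "\<And>k i. i \<in> {1..n} \<Longrightarrow> w k i \<notin> Top (A i) (B i) (C i) (D i) (G i (z k)) \<Longrightarrow>
          i \<in> ID \<Longrightarrow> \<rho> k i > 0
          \<and> x k i \<in> resolvent
               (\<lambda>q. (\<lambda>a. \<rho> k i *\<^sub>R (a + Dlin (D i) (D' i) (G i (z k)) q)) ` A i q)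
               (G i (z k) + \<rho> k i *\<^sub>R w k i - \<rho> k i *\<^sub>R (B i (G i (z k)) + C i (G i (z k))))
          \<and> y k i = (1 / \<rho> k i) *\<^sub>R (G i (z k) - x k i) + w k i
                     + (B i (x k i) - B i (G i (z k)))
                     + (D i (x k i) - Dlin (D i) (D' i) (G i (z k)) (x k i))"
    and step_plain: "\<And>k i. i \<in> {1..n} \<Longrightarrow> w k i \<notin> Top (A i) (B i) (C i) (D i) (G i (z k)) \<Longrightarrow>
          i \<notin> ID \<Longrightarrow> \<rho> k i > 0
          \<and> x k i \<in> resolvent (\<lambda>q. (\<lambda>a. \<rho> k i *\<^sub>R a) ` A i q)
               (G i (z k) + \<rho> k i *\<^sub>R w k i - \<rho> k i *\<^sub>R (B i (G i (z k)) + C i (G i (z k))))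
          \<and> y k i = (1 / \<rho> k i) *\<^sub>R (G i (z k) - x k i) + w k i
                     + (B i (x k i) - B i (G i (z k)))"
    and u_eq: "\<And>k i. i \<in> {1..<n} \<Longrightarrow> u k i = x k i - G i (x k n)"
    and v_eq: "\<And>k. v k = (\<Sum>i\<in>{1..n}. Gs i (y k i))"
    and \<phi>_eq: "\<And>k. \<phi> k = inner (z k) (v k) + (\<Sum>i\<in>{1..<n}. inner (w k i) (u k i))
                 - (\<Sum>i\<in>{1..n}. inner (x k i) (y k i)
                         + ereal_recip (\<beta> i) / 4 * (norm (x k i - G i (z k)))\<^sup>2)"
    and \<pi>_eq: "\<And>k. \<pi> k = (1 / \<gamma>) * (norm (v k))\<^sup>2 + (\<Sum>i\<in>{1..<n}. (norm (u k i))\<^sup>2)"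
    and \<tau>_bounds: "\<And>k. \<phi> k > 0 \<Longrightarrow> 0 \<le> \<tau> k \<and> \<tau> k \<le> 2"
    and update_pos: "\<And>k. \<phi> k > 0 \<Longrightarrow> \<alpha> k = \<tau> k * \<phi> k / \<pi> k
           \<and> z (Suc k) = z k - (\<alpha> k / \<gamma>) *\<^sub>R v k
           \<and> (\<forall>i\<in>{1..<n}. w (Suc k) i = w k i - \<alpha> k *\<^sub>R u k i)"
    and update_nonpos: "\<And>k. \<not> \<phi> k > 0 \<Longrightarrow> z (Suc k) = z k \<and> (\<forall>i\<in>{1..<n}. w (Suc k) i = w k i)"
    and P_eq: "\<And>k i. P k i = (if i = 0 then z k else if i < n then w k i else 0)"
    and Phi_eq: "\<And>k p. Phi k p = inner (p 0) (v k) + (\<Sum>i\<in>{1..<n}. inner (p i) (u k i))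
                 - (\<Sum>i\<in>{1..n}. inner (x k i) (y k i)
                         + ereal_recip (\<beta> i) / 4 * (norm (x k i - G i (z k)))\<^sup>2)"
    and grad_eq: "\<And>k i. grad k i = (if i = 0 then (1 / \<gamma>) *\<^sub>R v k else if i < n then u k i else 0)"
begin

abbreviation dual_ext :: "(nat \<Rightarrow> 'h) \<Rightarrow> nat \<Rightarrow> 'h" where
  "dual_ext p i \<equiv> if i = n then - (\<Sum>j\<in>{1..<n}. Gs j (p j)) else p i"

abbreviation ext_solution :: "(nat \<Rightarrow> 'h) \<Rightarrow> bool" where
  "ext_solution p \<equiv> p \<in> prodH n H
     \<and> (\<forall>i\<in>{1..n}. dual_ext p i \<in> Top (A i) (B i) (C i) (D i) (G i (p 0)))"

lemma subspace_H: "i \<le> n \<Longrightarrow> subspace (H i)"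
  using H_subspace H_last n_pos by (cases "i = n") auto

lemma G_mem: "i \<in> {1..n} \<Longrightarrow> \<xi> \<in> H 0 \<Longrightarrow> G i \<xi> \<in> H i"
  using G_between unfolding bounded_linear_between_def by blast

lemma Gs_mem: "i \<in> {1..n} \<Longrightarrow> \<eta> \<in> H i \<Longrightarrow> Gs i \<eta> \<in> H 0"
  using G_between unfolding is_adjoint_between_def by blast

lemma inner_G: "i \<in> {1..n} \<Longrightarrow> \<xi> \<in> H 0 \<Longrightarrow> \<eta> \<in> H i \<Longrightarrow> inner (G i \<xi>) \<eta> = inner \<xi> (Gs i \<eta>)"
  using G_between unfolding is_adjoint_between_def by blast

lemma Gs_last: "\<eta> \<in> H 0 \<Longrightarrow> Gs n \<eta> = \<eta>"
proof -
  have "is_adjoint_between (H 0) (H 0) (G n) (Gs n)"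
    using G_between[rule_format, of n] n_pos H_last by simp
  then show "\<eta> \<in> H 0 \<Longrightarrow> Gs n \<eta> = \<eta>"
    using is_adjoint_between_identity subspace_H[of 0] G_last by blast
qed

lemma sum_split_last: "(\<Sum>i\<in>{1..n}. f i) = (\<Sum>i\<in>{1..<n}. f i) + f n"
  using sum.last_plus[OF n_pos] by (simp add: add.commute)

lemma operator_props:
  assumes "i \<in> {1..n}"
  shows "subspace (H i)" "maximal_monotone_on (H i) (A i)" "monotone_op_on (H i) (B i)"
    "cocoercive_on (H i) (\<beta> i) (C i)" "\<beta> i > 0" "monotone_op_on (H i) (D i)"
  using assms subspace_H A_maximal_monotone B_monotone C_cocoercive D_monotone by auto

lemma step_inclusion:
  assumes "z k \<in> H 0" "i \<in> {1..n}"
  shows "\<exists>a\<in>A i (x k i). y k i = a + B i (x k i) + C i (G i (z k)) + D i (x k i)"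
proof (cases "w k i \<in> Top (A i) (B i) (C i) (D i) (G i (z k))")
  case True
  then show ?thesis using step_solved[OF assms(2) True] unfolding Top_def by auto
next
  case unsolved: False
  define q where "q = G i (z k)"
  define r where "r = q + \<rho> k i *\<^sub>R w k i - \<rho> k i *\<^sub>R (B i q + C i q)"
  show ?thesis
  proof (cases "i \<in> ID")
    case True
    define a where "a = (1 / \<rho> k i) *\<^sub>R (r - x k i) - Dlin (D i) (D' i) q (x k i)"
    have "\<rho> k i > 0" "x k i \<in> resolvent (\<lambda>p. (\<lambda>a. \<rho> k i *\<^sub>R (a + Dlin (D i) (D' i) q p)) ` A i p) r"
      and y: "y k i = (1 / \<rho> k i) *\<^sub>R (q - x k i) + w k i + (B i (x k i) - B i q)
                     + (D i (x k i) - Dlin (D i) (D' i) q (x k i))"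
      using step_linearized[OF assms(2) unsolved True] unfolding q_def r_def by blast+
    then have "a \<in> A i (x k i)" unfolding a_def by (intro resolvent_scaled_memD) auto
    moreover have "y k i = a + B i (x k i) + C i q + D i (x k i)"
      using \<open>\<rho> k i > 0\<close> unfolding y a_def r_def by (simp add: algebra_simps)
    ultimately show ?thesis unfolding q_def by blast
  next
    case False
    define a where "a = (1 / \<rho> k i) *\<^sub>R (r - x k i)"
    have "\<rho> k i > 0" "x k i \<in> resolvent (\<lambda>p. (\<lambda>a. \<rho> k i *\<^sub>R a) ` A i p) r"
      and y: "y k i = (1 / \<rho> k i) *\<^sub>R (q - x k i) + w k i + (B i (x k i) - B i q)"
      using step_plain[OF assms(2) unsolved False] unfolding q_def r_def by blast+
    then have a: "a \<in> A i (x k i)"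
      using resolvent_scaled_memD[of "x k i" "\<rho> k i" "\<lambda>_. 0" "A i" r] unfolding a_def by simp
    then have "D i (x k i) = 0"
      using D_vanishes maximal_monotone_on_memD(1) A_maximal_monotone assms(2) False by blast
    then have "y k i = a + B i (x k i) + C i q + D i (x k i)"
      using \<open>\<rho> k i > 0\<close> unfolding y a_def r_def by (simp add: algebra_simps)
    with a show ?thesis unfolding q_def by blast
  qed
qed

lemma step_mem:
  assumes "z k \<in> H 0" "i \<in> {1..n}"
  shows "x k i \<in> H i" "y k i \<in> H i"
proof -
  obtain a where a: "a \<in> A i (x k i)" "y k i = a + B i (x k i) + C i (G i (z k)) + D i (x k i)"
    using step_inclusion[OF assms] by blast
  show "x k i \<in> H i"
    using maximal_monotone_on_memD(1) A_maximal_monotone assms(2) a(1) by blast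
  show "y k i \<in> H i"
    unfolding a(2) using operator_sum_mem[OF operator_props(1-4,6)[OF assms(2)] G_mem[OF assms(2,1)] a(1)] .
qed

lemma v_mem: "z k \<in> H 0 \<Longrightarrow> v k \<in> H 0"
  unfolding v_eq using subspace_H[of 0] Gs_mem step_mem(2) by (auto intro: subspace_sum)

lemma u_mem:
  assumes "z k \<in> H 0" "i \<in> {1..<n}"
  shows "u k i \<in> H i"
proof -
  have "x k n \<in> H 0" using step_mem(1)[OF assms(1), of n] H_last n_pos by simp
  then show ?thesis
    using assms step_mem(1) G_mem subspace_H[of i] by (auto simp: u_eq intro: subspace_diff)
qed

lemma iterates_mem: "z k \<in> H 0 \<and> (\<forall>i\<in>{1..<n}. w k i \<in> H i)"
proof (induction k)
  case 0
  show ?case using init .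
next
  case (Suc k)
  then show ?case
  proof (cases "\<phi> k > 0")
    case True
    have zk: "z k \<in> H 0" and wk: "\<forall>i\<in>{1..<n}. w k i \<in> H i"
      using Suc by auto
    have "z (Suc k) \<in> H 0"
      using update_pos[OF True] subspace_H[of 0] zk v_mem[OF zk]
      by (simp add: subspace_diff subspace_scale)
    moreover have "w (Suc k) i \<in> H i" if "i \<in> {1..<n}" for i
      using update_pos[OF True] subspace_H[of i] that wk u_mem[OF zk that]
      by (simp add: subspace_diff subspace_scale)
    ultimately show ?thesis by blast
  next
    case False
    then show ?thesis using update_nonpos[OF False] Suc by auto
  qed
qed

lemma z_mem: "z k \<in> H 0"
  using iterates_mem by blast

lemma w_mem: "i \<in> {1..<n} \<Longrightarrow> w k i \<in> H i"
  using iterates_mem by blast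

lemma Phi_eq_inner_gamma: "Phi k = (\<lambda>p. inner_gamma \<gamma> n (grad k) p + Phi k (\<lambda>_. 0))"
proof
  fix p
  have "(\<Sum>i\<in>{1..<n}. inner (grad k i) (p i)) = (\<Sum>i\<in>{1..<n}. inner (p i) (u k i))"
    by (rule sum.cong) (auto simp: grad_eq inner_commute)
  then show "Phi k p = inner_gamma \<gamma> n (grad k) p + Phi k (\<lambda>_. 0)"
    using \<gamma>_pos unfolding Phi_eq inner_gamma_def by (simp add: grad_eq inner_commute)
qed

lemma Phi_affine: "affine_fun_on (prodH n H) (Phi k)"
  by (subst Phi_eq_inner_gamma) (rule affine_fun_on_inner_gamma)

lemma grad_mem: "grad k \<in> prodH n H"
  unfolding prodH_def using v_mem u_mem z_mem subspace_H[of 0] n_pos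
  by (auto simp: grad_eq intro: subspace_scale)

lemma Phi_has_gradient: "has_gradient_on \<gamma> n (prodH n H) (Phi k) (grad k)"
  by (subst Phi_eq_inner_gamma)
    (rule has_gradient_on_inner_gamma[OF less_imp_le[OF \<gamma>_pos] grad_mem])

lemma norm_gamma_grad: "(norm_gamma \<gamma> n (grad k))\<^sup>2 = \<pi> k"
proof -
  have "(\<Sum>i\<in>{1..<n}. inner (grad k i) (grad k i)) = (\<Sum>i\<in>{1..<n}. (norm (u k i))\<^sup>2)"
    by (rule sum.cong) (auto simp: grad_eq power2_norm_eq_inner)
  then show ?thesis
    using \<gamma>_pos unfolding norm_gamma_power2[OF less_imp_le[OF \<gamma>_pos]] inner_gamma_def \<pi>_eq
    by (simp add: grad_eq power2_norm_eq_inner)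
qed

lemma \<phi>_eq_Phi: "\<phi> k = Phi k (P k)"
proof -
  have "(\<Sum>i\<in>{1..<n}. inner (P k i) (u k i)) = (\<Sum>i\<in>{1..<n}. inner (w k i) (u k i))"
    by (rule sum.cong) (auto simp: P_eq)
  then show ?thesis unfolding \<phi>_eq Phi_eq by (simp add: P_eq)
qed

lemma sum_inner_dual_ext:
  assumes "p \<in> prodH n H" "X n \<in> H 0"
  shows "(\<Sum>i\<in>{1..n}. inner (X i) (dual_ext p i)) = (\<Sum>i\<in>{1..<n}. inner (p i) (X i - G i (X n)))"
proof -
  have p: "p i \<in> H i" if "i \<in> {1..<n}" for i
    using assms(1) that unfolding prodH_def by auto
  have "inner (X n) (dual_ext p n) = - (\<Sum>i\<in>{1..<n}. inner (X n) (Gs i (p i)))"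
    by (simp add: inner_sum_right)
  also have "\<dots> = - (\<Sum>i\<in>{1..<n}. inner (p i) (G i (X n)))"
  proof (intro arg_cong[where f = uminus] sum.cong refl)
    fix i assume "i \<in> {1..<n}"
    then show "inner (X n) (Gs i (p i)) = inner (p i) (G i (X n))"
      using inner_G[of i "X n" "p i"] assms(2) p by (simp add: inner_commute)
  qed
  finally show ?thesis
    unfolding sum_split_last by (simp add: inner_diff_right sum_subtractf inner_commute)
qed

lemma Phi_eq_sum:
  assumes "p \<in> prodH n H"
  shows "Phi k p = (\<Sum>i\<in>{1..n}. inner (G i (p 0) - x k i) (y k i - dual_ext p i)
                      - ereal_recip (\<beta> i) / 4 * (norm (x k i - G i (z k)))\<^sup>2)"
proof -
  have p0: "p 0 \<in> H 0" using assms n_pos unfolding prodH_def by auto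
  have "(\<Sum>i\<in>{1..n}. inner (G i (p 0)) (y k i)) = inner (p 0) (v k)"
    unfolding v_eq inner_sum_right using p0 step_mem(2)[OF z_mem] by (intro sum.cong) (auto simp: inner_G)
  moreover have "(\<Sum>i\<in>{1..n}. inner (G i (p 0)) (dual_ext p i)) = 0"
    using sum_inner_dual_ext[OF assms, of "\<lambda>i. G i (p 0)"] p0 G_last n_pos by simp
  moreover have "(\<Sum>i\<in>{1..n}. inner (x k i) (dual_ext p i)) = (\<Sum>i\<in>{1..<n}. inner (p i) (u k i))"
    using sum_inner_dual_ext[OF assms, of "x k"] step_mem(1)[OF z_mem, of n] H_last n_pos
    by (simp add: u_eq)
  ultimately show ?thesis
    unfolding Phi_eq by (simp add: inner_diff_left inner_diff_right sum.distrib sum_subtractf)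
qed

lemma Phi_nonpos_if_ext_solution:
  assumes "ext_solution p"
  shows "Phi k p \<le> 0"
proof -
  have p0: "p 0 \<in> H 0" using assms n_pos unfolding prodH_def by auto
  have "inner (G i (p 0) - x k i) (y k i - dual_ext p i)
          - ereal_recip (\<beta> i) / 4 * (norm (x k i - G i (z k)))\<^sup>2 \<le> 0" if i: "i \<in> {1..n}" for i
  proof -
    obtain a where "a \<in> A i (x k i)" "y k i = a + B i (x k i) + C i (G i (z k)) + D i (x k i)"
      using step_inclusion[OF z_mem i] by blast
    then show ?thesis
      using Top_gap_le[OF operator_props(2-6)[OF i] G_mem[OF i p0] step_mem(1)[OF z_mem i]
          G_mem[OF i z_mem]] assms i by auto
  qed
  then show ?thesis
    unfolding Phi_eq_sum[OF conjunct1[OF assms]] by (rule sum_nonpos)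
qed

lemma P_Suc:
  "P (Suc k) = (if Phi k (P k) > 0
     then (\<lambda>i. P k i - (\<tau> k * Phi k (P k) / (norm_gamma \<gamma> n (grad k))\<^sup>2) *\<^sub>R grad k i)
     else P k)"
proof (cases "\<phi> k > 0")
  case True
  then have "P (Suc k) i = P k i - (\<tau> k * \<phi> k / \<pi> k) *\<^sub>R grad k i" for i
    using update_pos[OF True] by (auto simp: P_eq grad_eq)
  then show ?thesis using True by (simp add: \<phi>_eq_Phi[symmetric] norm_gamma_grad fun_eq_iff)
next
  case False
  then have "P (Suc k) = P k" using update_nonpos[OF False] by (auto simp: P_eq)
  then show ?thesis using False by (simp add: \<phi>_eq_Phi)
qed

lemma ext_solution_exists: "\<exists>s. ext_solution s"
proof -
  obtain zs ws where zs: "zs \<in> H 0"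
    and ws: "\<forall>i\<in>{1..n}. ws i \<in> Top (A i) (B i) (C i) (D i) (G i zs)"
    and ws_sum: "(\<Sum>i\<in>{1..n}. Gs i (ws i)) = 0"
    using solvable by blast
  have ws_mem: "ws i \<in> H i" if "i \<in> {1..n}" for i
    using Top_mem[OF operator_props(1-4,6)[OF that] G_mem[OF that zs]] ws that by blast
  have "(\<Sum>i\<in>{1..<n}. Gs i (ws i)) + ws n = 0"
    using ws_sum ws_mem[of n] n_pos H_last Gs_last unfolding sum_split_last by simp
  then have "ws n = - (\<Sum>i\<in>{1..<n}. Gs i (ws i))"
    by (simp add: eq_neg_iff_add_eq_0 add.commute)
  moreover define s where "s = (\<lambda>i. if i = 0 then zs else if i < n then ws i else 0)"
  moreover have "(\<Sum>j\<in>{1..<n}. Gs j (s j)) = (\<Sum>j\<in>{1..<n}. Gs j (ws j))"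
    by (intro sum.cong) (auto simp: s_def)
  ultimately have "dual_ext s i = ws i" if "i \<in> {1..n}" for i
    using that by auto
  moreover have "s \<in> prodH n H"
    using zs ws_mem n_pos by (auto simp: prodH_def s_def)
  ultimately have "ext_solution s"
    using ws by (simp add: s_def)
  then show ?thesis by blast
qed

lemma inner_gamma_P_Suc_le:
  assumes "ext_solution s"
  shows "inner_gamma \<gamma> n (\<lambda>i. P (Suc k) i - s i) (\<lambda>i. P (Suc k) i - s i)
           \<le> inner_gamma \<gamma> n (\<lambda>i. P k i - s i) (\<lambda>i. P k i - s i)"
proof (cases "Phi k (P k) > 0")
  case True
  have "inner_gamma \<gamma> n (grad k) (\<lambda>i. P k i - s i) = Phi k (P k) - Phi k s"
    using fun_cong[OF Phi_eq_inner_gamma, of k "P k"] fun_cong[OF Phi_eq_inner_gamma, of k s]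
    by (simp add: inner_gamma_diff_right)
  then have "inner_gamma \<gamma> n (grad k) (\<lambda>i. P k i - s i) \<ge> Phi k (P k)"
    using Phi_nonpos_if_ext_solution[OF assms] by simp
  moreover have "0 \<le> \<tau> k" "\<tau> k \<le> 2"
    using \<tau>_bounds True by (auto simp: \<phi>_eq_Phi)
  ultimately show ?thesis
    using inner_gamma_relaxed_projection_le[of \<gamma> "Phi k (P k)" n "grad k" "P k" s "\<tau> k"] True \<gamma>_pos
    by (simp add: P_Suc norm_gamma_power2)
next
  case False
  then show ?thesis by (simp add: P_Suc)
qed

lemma bounded_P_component:
  assumes "i < n"
  shows "bounded (range (\<lambda>k. P k i))"
proof -
  obtain s where s: "ext_solution s" using ext_solution_exists by blast
  define d where "d k = (\<lambda>j. P k j - s j)" for k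
  define N where "N = inner_gamma \<gamma> n (d 0) (d 0)"
  have N: "inner_gamma \<gamma> n (d k) (d k) \<le> N" for k
    unfolding N_def
  proof (induction k)
    case (Suc k)
    then show ?case using inner_gamma_P_Suc_le[OF s, of k] unfolding d_def by linarith
  qed simp
  have "(norm (P k i - s i))\<^sup>2 \<le> (if i = 0 then N / \<gamma> else N)" for k
  proof (cases "i = 0")
    case True
    then have "\<gamma> * (norm (P k i - s i))\<^sup>2 \<le> N"
      using inner_gamma_self_ge_component(1)[where \<gamma> = \<gamma> and p = "d k" and n = n] \<gamma>_pos N[of k]
      by (simp add: d_def)
    then show ?thesis using True \<gamma>_pos by (simp add: pos_le_divide_eq mult.commute)
  next
    case False
    then show ?thesis
      using inner_gamma_self_ge_component(2)[where \<gamma> = \<gamma> and p = "d k" and n = n and i = i] \<gamma>_pos N[of k] assms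
      by (simp add: d_def)
  qed
  then show ?thesis by (rule bounded_range_if_norm_diff_power2_le)
qed

lemma bounded_z: "bounded (range z)"
  using bounded_P_component[of 0] n_pos by (simp add: P_eq)

lemma bounded_w_less:
  assumes "i \<in> {1..<n}"
  shows "bounded (range (\<lambda>k. w k i))"
proof -
  have "bounded (range (\<lambda>k. P k i))"
    using assms by (intro bounded_P_component) simp
  moreover have "(\<lambda>k. P k i) = (\<lambda>k. w k i)"
    using assms by (simp add: P_eq)
  ultimately show ?thesis by metis
qed

lemma bounded_w:
  assumes "i \<in> {1..n}"
  shows "bounded (range (\<lambda>k. w k i))"
proof (cases "i < n")
  case True
  then show ?thesis using bounded_w_less assms by simp
next
  case False
  have "bounded (range (\<lambda>k. \<Sum>j\<in>{1..<n}. Gs j (w k j)))"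
  proof (rule bounded_range_sum)
    fix j assume j: "j \<in> {1..<n}"
    then have "j \<in> {1..n}" by simp
    then obtain K where "K \<ge> 0" "\<forall>\<eta>\<in>H j. norm (Gs j \<eta>) \<le> K * norm \<eta>"
      using is_adjoint_between_bounded G_between by metis
    moreover have "range (\<lambda>k. w k j) \<subseteq> H j"
      using w_mem j by blast
    ultimately show "bounded (range (\<lambda>k. Gs j (w k j)))"
      using bounded_range_comp_norm_le bounded_w_less[OF j] by blast
  qed simp
  moreover have "i = n" using False assms by simp
  ultimately show ?thesis by (simp add: w_last)
qed

end

theorem proposition4p2:
  fixes n :: nat
    and H :: "nat \<Rightarrow> 'h::{real_inner, complete_space} set"
    and G Gs :: "nat \<Rightarrow> 'h \<Rightarrow> 'h"
    and A :: "nat \<Rightarrow> 'h \<Rightarrow> 'h set"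
    and B C D :: "nat \<Rightarrow> 'h \<Rightarrow> 'h"
    and D' :: "nat \<Rightarrow> 'h \<Rightarrow> 'h \<Rightarrow> 'h"
    and lip m :: "nat \<Rightarrow> real"
    and \<beta> :: "nat \<Rightarrow> ereal"
    and ID :: "nat set"
    and \<tau>l \<tau>u \<theta>l \<theta>u \<rho>hat \<delta>hat \<gamma> :: real
    and z :: "nat \<Rightarrow> 'h"
    and w x y u :: "nat \<Rightarrow> nat \<Rightarrow> 'h"
    and v :: "nat \<Rightarrow> 'h"
    and \<rho> :: "nat \<Rightarrow> nat \<Rightarrow> real"
    and \<phi> \<pi> \<tau> \<alpha> :: "nat \<Rightarrow> real"
    and P grad :: "nat \<Rightarrow> nat \<Rightarrow> 'h"
    and Phi :: "nat \<Rightarrow> (nat \<Rightarrow> 'h) \<Rightarrow> real"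
  assumes n2: "n \<ge> 2"
    and Hsub: "\<forall>i<n. closed_subspace (H i)"
    and Hn: "H n = H 0"
    \<comment> \<open>(A1)\<close>
    and A1: "\<forall>i\<in>{1..n}. bounded_linear_between (H 0) (H i) (G i)
                          \<and> is_adjoint_between (H 0) (H i) (G i) (Gs i)"
    and A1n: "\<forall>z'\<in>H 0. G n z' = z'"
    \<comment> \<open>(A2)\<close>
    and A2: "\<forall>i\<in>{1..n}. maximal_monotone_on (H i) (A i)"
    \<comment> \<open>(A3)\<close>
    and A3: "\<forall>i\<in>{1..n}. monotone_op_on (H i) (B i) \<and> lip i \<ge> 0 \<and> lipschitz_op_on (H i) (lip i) (B i)"
    \<comment> \<open>(A4)\<close>
    and A4: "\<forall>i\<in>{1..n}. \<beta> i > 0 \<and> cocoercive_on (H i) (\<beta> i) (C i)"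
    \<comment> \<open>(A5)\<close>
    and A5: "\<forall>i\<in>{1..n}. monotone_op_on (H i) (D i) \<and> m i \<ge> 0
               \<and> (\<forall>x'\<in>H i. (D i has_derivative D' i x') (at x' within H i))
               \<and> (\<forall>x'\<in>H i. \<forall>y'\<in>H i. \<forall>h\<in>H i.
                     norm (D' i x' h - D' i y' h) \<le> m i * norm (x' - y') * norm h)"
    \<comment> \<open>(A6)\<close>
    and A6: "\<exists>zs\<in>H 0. \<exists>ws. (\<forall>i\<in>{1..n}. ws i \<in> Top (A i) (B i) (C i) (D i) (G i zs))
                          \<and> (\<Sum>i\<in>{1..n}. Gs i (ws i)) = 0"
    \<comment> \<open>(A7)\<close>
    and A7: "ID \<subseteq> {1..n} \<and> (\<forall>i\<in>ID. m i > 0)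
               \<and> (\<forall>i\<in>{1..n} - ID. m i = 0 \<and> (\<forall>x'\<in>H i. D i x' = 0))"
    \<comment> \<open>parameters of Algorithm PS\<close>
    and par: "0 < \<tau>l \<and> \<tau>l < \<tau>u \<and> \<tau>u < 2 \<and> 0 < \<theta>l \<and> \<theta>l < \<theta>u \<and> \<theta>u < 2
              \<and> \<rho>hat > 0 \<and> \<delta>hat > 0 \<and> \<gamma> > 0"
    and init: "z 0 \<in> H 0 \<and> (\<forall>i\<in>{1..<n}. w 0 i \<in> H i)"
    and wn: "\<forall>k. w k n = - (\<Sum>i\<in>{1..<n}. Gs i (w k i))"
    \<comment> \<open>steps (i), (ii), (iii)\<close>
    and step: "\<forall>k. \<forall>i\<in>{1..n}.
       (w k i \<in> Top (A i) (B i) (C i) (D i) (G i (z k)) \<longrightarrow>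
          \<rho> k i = \<rho>hat \<and> x k i = G i (z k) \<and> y k i = w k i)
     \<and> (w k i \<notin> Top (A i) (B i) (C i) (D i) (G i (z k)) \<and> i \<in> ID \<longrightarrow>
          \<rho> k i > 0
          \<and> x k i \<in> resolvent
               (\<lambda>q. (\<lambda>a. \<rho> k i *\<^sub>R (a + Dlin (D i) (D' i) (G i (z k)) q)) ` A i q)
               (G i (z k) + \<rho> k i *\<^sub>R w k i - \<rho> k i *\<^sub>R (B i (G i (z k)) + C i (G i (z k))))
          \<and> \<theta>l \<le> 4 * (lip i)\<^sup>2 * (\<rho> k i)\<^sup>2 + (ereal_recip (\<beta> i) + \<delta>hat) * \<rho> k i
                   + (m i * \<rho> k i * norm (x k i - G i (z k)))\<^sup>2
          \<and> 4 * (lip i)\<^sup>2 * (\<rho> k i)\<^sup>2 + (ereal_recip (\<beta> i) + \<delta>hat) * \<rho> k i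
                   + (m i * \<rho> k i * norm (x k i - G i (z k)))\<^sup>2 \<le> \<theta>u
          \<and> y k i = (1 / \<rho> k i) *\<^sub>R (G i (z k) - x k i) + w k i
                     + (B i (x k i) - B i (G i (z k)))
                     + (D i (x k i) - Dlin (D i) (D' i) (G i (z k)) (x k i)))
     \<and> (w k i \<notin> Top (A i) (B i) (C i) (D i) (G i (z k)) \<and> i \<notin> ID \<longrightarrow>
          \<rho> k i > 0
          \<and> x k i \<in> resolvent (\<lambda>q. (\<lambda>a. \<rho> k i *\<^sub>R a) ` A i q)
               (G i (z k) + \<rho> k i *\<^sub>R w k i - \<rho> k i *\<^sub>R (B i (G i (z k)) + C i (G i (z k))))
          \<and> y k i = (1 / \<rho> k i) *\<^sub>R (G i (z k) - x k i) + w k i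
                     + (B i (x k i) - B i (G i (z k))))"
    and u_def: "\<forall>k. \<forall>i\<in>{1..<n}. u k i = x k i - G i (x k n)"
    and v_def: "\<forall>k. v k = (\<Sum>i\<in>{1..n}. Gs i (y k i))"
    and \<phi>_def: "\<forall>k. \<phi> k = inner (z k) (v k) + (\<Sum>i\<in>{1..<n}. inner (w k i) (u k i))
                 - (\<Sum>i\<in>{1..n}. inner (x k i) (y k i)
                         + ereal_recip (\<beta> i) / 4 * (norm (x k i - G i (z k)))\<^sup>2)"
    and \<pi>_def: "\<forall>k. \<pi> k = (1 / \<gamma>) * (norm (v k))\<^sup>2 + (\<Sum>i\<in>{1..<n}. (norm (u k i))\<^sup>2)"
    and update: "\<forall>k.
       (\<phi> k > 0 \<longrightarrow> \<tau> k \<in> {\<tau>l..\<tau>u} \<and> \<alpha> k = \<tau> k * \<phi> k / \<pi> k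
           \<and> z (Suc k) = z k - (\<alpha> k / \<gamma>) *\<^sub>R v k
           \<and> (\<forall>i\<in>{1..<n}. w (Suc k) i = w k i - \<alpha> k *\<^sub>R u k i))
     \<and> (\<not> \<phi> k > 0 \<longrightarrow> z (Suc k) = z k \<and> (\<forall>i\<in>{1..<n}. w (Suc k) i = w k i))"
    \<comment> \<open>the points p^k, the affine functions \<phi>_k and the vectors (\<gamma>^{-1} v^k, u_1^k, ...)\<close>
    and P_def: "\<forall>k. P k = (\<lambda>i. if i = 0 then z k else if i < n then w k i else 0)"
    and Phi_def: "\<forall>k p. Phi k p = inner (p 0) (v k) + (\<Sum>i\<in>{1..<n}. inner (p i) (u k i))
                 - (\<Sum>i\<in>{1..n}. inner (x k i) (y k i)
                         + ereal_recip (\<beta> i) / 4 * (norm (x k i - G i (z k)))\<^sup>2)"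
    and grad_def: "\<forall>k. grad k = (\<lambda>i. if i = 0 then (1 / \<gamma>) *\<^sub>R v k else if i < n then u k i else 0)"
  shows "\<forall>k.
     \<phi> k = Phi k (P k)
     \<comment> \<open>(a)\<close>
   \<and> affine_fun_on (prodH n H) (Phi k)
   \<and> has_gradient_on \<gamma> n (prodH n H) (Phi k) (grad k)
   \<and> (norm_gamma \<gamma> n (grad k))\<^sup>2 = \<pi> k
     \<comment> \<open>(b)\<close>
   \<and> (\<forall>p\<in>prodH n H.
        Phi k p = (\<Sum>i\<in>{1..n}.
           inner (G i (p 0) - x k i)
                 (y k i - (if i = n then - (\<Sum>j\<in>{1..<n}. Gs j (p j)) else p i))
           - ereal_recip (\<beta> i) / 4 * (norm (x k i - G i (z k)))\<^sup>2))
     \<comment> \<open>(c)\<close>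
   \<and> (\<forall>p\<in>prodH n H.
        (\<forall>i\<in>{1..n}. (if i = n then - (\<Sum>j\<in>{1..<n}. Gs j (p j)) else p i)
                        \<in> Top (A i) (B i) (C i) (D i) (G i (p 0)))
        \<longrightarrow> Phi k p \<le> 0)
     \<comment> \<open>(d)\<close>
   \<and> P (Suc k) = (if Phi k (P k) > 0
        then (\<lambda>i. P k i - (\<tau> k * Phi k (P k) / (norm_gamma \<gamma> n (grad k))\<^sup>2) *\<^sub>R grad k i)
        else P k)
     \<comment> \<open>(e)\<close>
   \<and> bounded (range z) \<and> (\<forall>i\<in>{1..n}. bounded (range (\<lambda>k. w k i)))"
proof -
  interpret projective_splitting n H G Gs A B C D D' \<beta> ID \<gamma> z w x y u v \<rho> \<phi> \<pi> \<tau> \<alpha> P grad Phi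
  proof unfold_locales
    show "0 \<le> \<tau> k \<and> \<tau> k \<le> 2" if "\<phi> k > 0" for k
    proof -
      have "\<tau> k \<in> {\<tau>l..\<tau>u}" using update that by blast
      then show ?thesis using par by simp
    qed
  qed (fact assms
      | (simp add: wn u_def v_def \<phi>_def \<pi>_def P_def Phi_def grad_def; fail)
      | (use n2 Hsub par in \<open>simp add: closed_subspace_def; fail\<close>)
      | (use A3 A5 A7 in blast) | (use step in blast) | (use update in blast))+
  show ?thesis
    using \<phi>_eq_Phi Phi_affine Phi_has_gradient norm_gamma_grad Phi_eq_sum
      Phi_nonpos_if_ext_solution P_Suc bounded_z bounded_w by blast
qed

end
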